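(* Let $c>2$, $m\ge3$ and $p\le1/2$. If $mp\ge c$, then for every $q\in[0,1]$, \[ \ell_1(\mathrm{Bin}(m,p),\mathrm{Bin}(m,q))\ge\frac1{350}\min\left(\frac{\sqrt m\,|p-q|}{\sqrt{p(1-p)}},1\right). \]
   Context: $m$ is an integer, $p\in[0,1]$, and $\ell_1(P,Q)=\sum_x|P(x)-Q(x)|$. *)

theory Defs
  imports "HOL-Probability.Probability"
begin

text \<open>l1 distance between two distributions on the naturals, both supported on {0..m}.\<close>
definition l1_bin :: "nat \<Rightarrow> real \<Rightarrow> real \<Rightarrow> real" where
  "l1_bin m p q = (\<Sum>k\<le>m. \<bar>pmf (binomial_pmf m p) k - pmf (binomial_pmf m q) k\<bar>)"

end

theory Submission
  imports Defs
begin

(* Let sigma^2 = m p (1 - p) >= 1 and t = m |p - q| / sigma; by the symmetry k <-> m - k we may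
   assume p < q.  The log-likelihood ratio of Bin(m, q) against Bin(m, p) at k is affine,
   (logit q - logit p) (k - m p) - m KL(p, q), so exp l >= 1 + l bounds the positive excess
   sum_k (w_q k - w_p k)^+ below by (logit q - logit p) E|k - m p| / 2 - m KL(p, q).  A fourth-moment
   argument gives E|k - m p| >= sigma / 2, and for t <= 1/24 the slope is at least
   (2/3) d / (p (1 - p)) while KL(p, q) <= 2 d^2 / (p (1 - p)) (d = q - p), whence l1 >= t / 12.
   For larger t the excess at the threshold parameter q' (t = 1/24) is at least 1/288 and is the
   gain in expectation of a monotone test, which by stochastic monotonicity only increases
   when q' is moved up to q. *)

definition binomial_weight :: "nat \<Rightarrow> real \<Rightarrow> nat \<Rightarrow> real" where
  "binomial_weight m r k = real (m choose k) * r ^ k * (1 - r) ^ (m - k)"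

definition binomial_expect :: "nat \<Rightarrow> real \<Rightarrow> (nat \<Rightarrow> real) \<Rightarrow> real" where
  "binomial_expect m r f = (\<Sum>k\<le>m. binomial_weight m r k * f k)"

definition binomial_dev :: "nat \<Rightarrow> real \<Rightarrow> nat \<Rightarrow> real" where
  "binomial_dev m r k = real k - real m * r"

lemma binomial_weight_nonneg: "0 \<le> r \<Longrightarrow> r \<le> 1 \<Longrightarrow> 0 \<le> binomial_weight m r k"
  unfolding binomial_weight_def by simp

lemma binomial_weight_eq_0: "m < k \<Longrightarrow> binomial_weight m r k = 0"
  unfolding binomial_weight_def by simp

lemma binomial_weight_Suc_0: "binomial_weight (Suc m) r 0 = (1 - r) * binomial_weight m r 0"
  unfolding binomial_weight_def by simp

lemma binomial_weight_Suc_Suc: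
  "binomial_weight (Suc m) r (Suc k) = r * binomial_weight m r k + (1 - r) * binomial_weight m r (Suc k)"
proof (cases "k < m")
  case True
  then have "m - k = Suc (m - Suc k)" by simp
  then show ?thesis unfolding binomial_weight_def by (simp add: algebra_simps)
next
  case False
  then show ?thesis unfolding binomial_weight_def by (cases "k = m") (auto simp: binomial_eq_0)
qed

lemma binomial_weight_reflect:
  "k \<le> m \<Longrightarrow> binomial_weight m (1 - r) (m - k) = binomial_weight m r k"
  unfolding binomial_weight_def by (simp add: binomial_symmetric[symmetric] algebra_simps)

lemma binomial_expect_Suc:
  "binomial_expect (Suc m) r f = r * binomial_expect m r (\<lambda>k. f (Suc k)) + (1 - r) * binomial_expect m r f"
proof -
  let ?w = "binomial_weight m r"
  have "binomial_expect (Suc m) r f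
      = binomial_weight (Suc m) r 0 * f 0 + (\<Sum>k\<le>m. binomial_weight (Suc m) r (Suc k) * f (Suc k))"
    unfolding binomial_expect_def by (rule sum.atMost_Suc_shift)
  also have "\<dots> = r * (\<Sum>k\<le>m. ?w k * f (Suc k))
      + (1 - r) * (?w 0 * f 0 + (\<Sum>k\<le>m. ?w (Suc k) * f (Suc k)))"
    by (simp add: binomial_weight_Suc_0 binomial_weight_Suc_Suc distrib_left distrib_right
        sum.distrib sum_distrib_left mult.assoc)
  also have "?w 0 * f 0 + (\<Sum>k\<le>m. ?w (Suc k) * f (Suc k)) = (\<Sum>k\<le>Suc m. ?w k * f k)"
    by (rule sum.atMost_Suc_shift[symmetric])
  also have "\<dots> = binomial_expect m r f"
    by (simp add: binomial_expect_def binomial_weight_eq_0)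
  finally show ?thesis by (simp add: binomial_expect_def)
qed

lemma binomial_expect_add:
  "binomial_expect m r (\<lambda>k. f k + g k) = binomial_expect m r f + binomial_expect m r g"
  unfolding binomial_expect_def by (simp add: algebra_simps sum.distrib)

lemma binomial_expect_cmult: "binomial_expect m r (\<lambda>k. c * f k) = c * binomial_expect m r f"
  unfolding binomial_expect_def by (simp add: algebra_simps sum_distrib_left)

lemma binomial_expect_const: "binomial_expect m r (\<lambda>_. c) = c"
proof (induction m)
  case 0
  then show ?case by (simp add: binomial_expect_def binomial_weight_def)
next
  case (Suc m)
  then show ?case by (simp add: binomial_expect_Suc algebra_simps)
qed

lemma binomial_expect_mono:
  assumes "0 \<le> r" "r \<le> 1" "\<And>k. k \<le> m \<Longrightarrow> f k \<le> g k"
  shows "binomial_expect m r f \<le> binomial_expect m r g"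
  unfolding binomial_expect_def
  using assms by (intro sum_mono mult_left_mono) (auto simp: binomial_weight_nonneg)

lemma binomial_expect_mono_param:
  assumes "mono f" "0 \<le> r" "r \<le> r'" "r' \<le> 1"
  shows "binomial_expect m r f \<le> binomial_expect m r' f"
  using assms(1)
proof (induction m arbitrary: f)
  case 0
  then show ?case by (simp add: binomial_expect_def binomial_weight_def)
next
  case (Suc m)
  let ?E = "binomial_expect m" and ?g = "\<lambda>k. f (Suc k)"
  have "mono ?g" using Suc.prems by (auto simp: mono_def)
  then have IH: "?E r ?g \<le> ?E r' ?g" "?E r f \<le> ?E r' f" using Suc by auto
  have shift: "?E r' f \<le> ?E r' ?g"
    using assms Suc.prems by (intro binomial_expect_mono) (auto simp: mono_def)
  have "binomial_expect (Suc m) r f = r * ?E r ?g + (1 - r) * ?E r f"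
    by (rule binomial_expect_Suc)
  also have "\<dots> \<le> r * ?E r' ?g + (1 - r) * ?E r' f"
    using IH assms by (intro add_mono mult_left_mono) auto
  also have "\<dots> \<le> r' * ?E r' ?g + (1 - r') * ?E r' f"
    using shift assms mult_left_mono[OF shift, of "r' - r"] by (simp add: algebra_simps)
  also have "\<dots> = binomial_expect (Suc m) r' f"
    by (rule binomial_expect_Suc[symmetric])
  finally show ?case .
qed

lemma binomial_dev_Suc: "binomial_dev (Suc m) r = (\<lambda>k. binomial_dev m r k + - r)"
  unfolding binomial_dev_def by (simp add: algebra_simps)

lemma binomial_dev_Suc_Suc: "binomial_dev (Suc m) r (Suc k) = binomial_dev m r k + (1 - r)"
  unfolding binomial_dev_def by (simp add: algebra_simps)

lemma binomial_expect_dev: "binomial_expect m r (binomial_dev m r) = 0"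
proof (induction m)
  case 0
  then show ?case by (simp add: binomial_expect_def binomial_weight_def binomial_dev_def)
next
  case (Suc m)
  then show ?case
    unfolding binomial_expect_Suc binomial_dev_Suc_Suc
    by (simp only: binomial_dev_Suc binomial_expect_add binomial_expect_const) simp
qed

lemma binomial_expect_dev_shift_sq:
  "binomial_expect m r (\<lambda>k. (binomial_dev m r k + a)\<^sup>2)
    = binomial_expect m r (\<lambda>k. (binomial_dev m r k)\<^sup>2) + a\<^sup>2"
proof -
  have "(\<lambda>k. (binomial_dev m r k + a)\<^sup>2)
      = (\<lambda>k. (binomial_dev m r k)\<^sup>2 + ((2 * a) * binomial_dev m r k + a\<^sup>2))"
    by (simp add: power2_eq_square algebra_simps)
  then show ?thesis
    by (simp only: binomial_expect_add binomial_expect_cmult binomial_expect_const binomial_expect_dev)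
qed

lemma binomial_expect_dev_sq: "binomial_expect m r (\<lambda>k. (binomial_dev m r k)\<^sup>2) = real m * r * (1 - r)"
proof (induction m)
  case 0
  then show ?case by (simp add: binomial_expect_def binomial_weight_def binomial_dev_def)
next
  case (Suc m)
  then show ?case
    unfolding binomial_expect_Suc binomial_dev_Suc_Suc
    by (simp only: binomial_dev_Suc binomial_expect_dev_shift_sq) (simp add: algebra_simps power2_eq_square)
qed

lemma binomial_expect_dev_shift_pow4:
  "binomial_expect m r (\<lambda>k. (binomial_dev m r k + a) ^ 4)
    = binomial_expect m r (\<lambda>k. (binomial_dev m r k) ^ 4) + 4 * a * binomial_expect m r (\<lambda>k. (binomial_dev m r k) ^ 3)
      + 6 * a\<^sup>2 * (real m * r * (1 - r)) + a ^ 4"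
proof -
  have "(\<lambda>k. (binomial_dev m r k + a) ^ 4) = (\<lambda>k. (binomial_dev m r k) ^ 4 + ((4 * a) * (binomial_dev m r k) ^ 3
      + ((6 * a\<^sup>2) * (binomial_dev m r k)\<^sup>2 + ((4 * a ^ 3) * binomial_dev m r k + a ^ 4))))"
    by (simp add: power_numeral_reduce algebra_simps)
  then show ?thesis
    by (simp only: binomial_expect_add binomial_expect_cmult binomial_expect_const binomial_expect_dev
        binomial_expect_dev_sq)
qed

lemma binomial_expect_dev_pow4:
  "binomial_expect m r (\<lambda>k. (binomial_dev m r k) ^ 4)
    = 3 * (real m * r * (1 - r))\<^sup>2 - 6 * real m * (r * (1 - r))\<^sup>2 + real m * r * (1 - r)"
proof (induction m)
  case 0
  then show ?case by (simp add: binomial_expect_def binomial_weight_def binomial_dev_def)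
next
  case (Suc m)
  then show ?case
    unfolding binomial_expect_Suc binomial_dev_Suc_Suc
    by (simp only: binomial_dev_Suc binomial_expect_dev_shift_pow4)
      (simp add: algebra_simps power_numeral_reduce)
qed

text \<open>Mean absolute deviation via the fourth moment: with \<open>\<sigma> = sqrt V\<close> one has
  \<open>12 \<sigma>\<^sup>2 z\<^sup>2 \<le> 16 \<sigma>\<^sup>3 \<bar>z\<bar> + z\<^sup>4\<close>, because the difference is \<open>\<bar>z\<bar> (\<bar>z\<bar> - 2\<sigma>)\<^sup>2 (\<bar>z\<bar> + 4\<sigma>)\<close>,
  and \<open>E z\<^sup>4 \<le> 3 V\<^sup>2 + V \<le> 4 V\<^sup>2\<close> once \<open>V \<ge> 1\<close>.\<close>
lemma binomial_expect_abs_dev_ge: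
  assumes "0 \<le> r" "r \<le> 1" and V: "real m * r * (1 - r) \<ge> 1"
  shows "binomial_expect m r (\<lambda>k. \<bar>binomial_dev m r k\<bar>) \<ge> sqrt (real m * r * (1 - r)) / 2"
proof -
  define V where "V = real m * r * (1 - r)"
  define \<sigma> where "\<sigma> = sqrt V"
  let ?Z = "binomial_dev m r" and ?E = "binomial_expect m r"
  have "V \<ge> 1" "\<sigma> > 0" "\<sigma> * \<sigma> = V" using V by (simp_all add: V_def \<sigma>_def)
  have quartic: "12 * V * (?Z k)\<^sup>2 \<le> 16 * (V * \<sigma>) * \<bar>?Z k\<bar> + (?Z k) ^ 4" for k
  proof -
    define z where "z = \<bar>?Z k\<bar>"
    have "0 \<le> z * (z - 2 * \<sigma>)\<^sup>2 * (z + 4 * \<sigma>)" using \<open>\<sigma> > 0\<close> by (simp add: z_def)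
    also have "\<dots> = z ^ 4 - 12 * (\<sigma> * \<sigma>) * z\<^sup>2 + 16 * (\<sigma> * \<sigma>) * \<sigma> * z"
      by (simp add: power2_eq_square power_numeral_reduce algebra_simps)
    finally show ?thesis
      using \<open>\<sigma> * \<sigma> = V\<close> by (simp add: z_def power_even_abs_numeral algebra_simps)
  qed
  have "?E (\<lambda>k. (12 * V) * (?Z k)\<^sup>2) \<le> ?E (\<lambda>k. (16 * (V * \<sigma>)) * \<bar>?Z k\<bar> + (?Z k) ^ 4)"
    using assms quartic by (intro binomial_expect_mono) (auto simp: algebra_simps)
  then have "12 * V * V \<le> 16 * (V * \<sigma>) * ?E (\<lambda>k. \<bar>?Z k\<bar>) + (3 * V\<^sup>2 - 6 * real m * (r * (1 - r))\<^sup>2 + V)"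
    by (simp only: binomial_expect_add binomial_expect_cmult binomial_expect_dev_sq binomial_expect_dev_pow4)
      (simp add: V_def)
  moreover have "0 \<le> 6 * real m * (r * (1 - r))\<^sup>2" by simp
  moreover have "V \<le> V * V" using \<open>V \<ge> 1\<close> by simp
  ultimately have "8 * (V * V) \<le> 16 * (V * \<sigma>) * ?E (\<lambda>k. \<bar>?Z k\<bar>)"
    by (simp only: power2_eq_square)
  then have "(8 * V * \<sigma>) * \<sigma> \<le> (8 * V * \<sigma>) * (2 * ?E (\<lambda>k. \<bar>?Z k\<bar>))"
    using \<open>\<sigma> * \<sigma> = V\<close> by (simp add: algebra_simps)
  moreover have "0 < 8 * V * \<sigma>" using \<open>V \<ge> 1\<close> \<open>\<sigma> > 0\<close> by simp
  ultimately have "\<sigma> \<le> 2 * ?E (\<lambda>k. \<bar>?Z k\<bar>)" by (simp only: mult_le_cancel_left_pos)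
  then show ?thesis by (simp add: \<sigma>_def V_def)
qed

lemma binomial_expect_pos_dev:
  "binomial_expect m r (\<lambda>k. max (binomial_dev m r k) 0) = binomial_expect m r (\<lambda>k. \<bar>binomial_dev m r k\<bar>) / 2"
proof -
  have "(\<lambda>k. max (binomial_dev m r k) 0) = (\<lambda>k. (1/2) * \<bar>binomial_dev m r k\<bar> + (1/2) * binomial_dev m r k)"
    by auto
  then show ?thesis
    by (simp only: binomial_expect_add binomial_expect_cmult binomial_expect_dev)
qed

definition logit :: "real \<Rightarrow> real" where
  "logit x = ln (x / (1 - x))"

definition kl_bernoulli :: "real \<Rightarrow> real \<Rightarrow> real" where
  "kl_bernoulli p q = p * ln (p / q) + (1 - p) * ln ((1 - p) / (1 - q))"

lemma kl_bernoulli_nonneg: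
  assumes "0 < p" "p < 1" "0 < q" "q < 1"
  shows "0 \<le> kl_bernoulli p q"
proof -
  have "ln (q / p) \<le> q / p - 1" "ln ((1 - q) / (1 - p)) \<le> (1 - q) / (1 - p) - 1"
    using assms by (simp_all add: ln_le_minus_one)
  then have "p - q \<le> p * ln (p / q)" "q - p \<le> (1 - p) * ln ((1 - p) / (1 - q))"
    using assms mult_left_mono[of _ _ p] mult_left_mono[of _ _ "1 - p"]
    by (auto simp: ln_div field_simps)
  then show ?thesis by (simp add: kl_bernoulli_def)
qed

lemma kl_bernoulli_le_chi_square:
  assumes "0 < p" "p < 1" "0 < q" "q < 1"
  shows "kl_bernoulli p q \<le> (q - p)\<^sup>2 / (q * (1 - q))"
proof -
  have "ln (p / q) \<le> p / q - 1" "ln ((1 - p) / (1 - q)) \<le> (1 - p) / (1 - q) - 1"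
    using assms by (simp_all add: ln_le_minus_one)
  then have "kl_bernoulli p q \<le> p * (p / q - 1) + (1 - p) * ((1 - p) / (1 - q) - 1)"
    unfolding kl_bernoulli_def using assms by (intro add_mono mult_left_mono) auto
  also have "\<dots> = (q - p)\<^sup>2 / (q * (1 - q))"
    using assms by (simp add: field_simps power2_eq_square)
  finally show ?thesis .
qed

lemma logit_diff_ge:
  assumes "0 < p" "p < 1" "0 < q" "q < 1"
  shows "(q - p) / q + (q - p) / (1 - p) \<le> logit q - logit p"
proof -
  have "ln (p / q) \<le> p / q - 1" "ln ((1 - q) / (1 - p)) \<le> (1 - q) / (1 - p) - 1"
    using assms by (simp_all add: ln_le_minus_one)
  moreover have "logit q - logit p = - ln (p / q) - ln ((1 - q) / (1 - p))"
    using assms by (simp add: logit_def ln_div)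
  moreover have "p / q - 1 = - ((q - p) / q)" "(1 - q) / (1 - p) - 1 = - ((q - p) / (1 - p))"
    using assms by (simp_all add: field_simps)
  ultimately show ?thesis by linarith
qed

lemma logit_diff_ge_near:
  assumes "0 < p" "p < q" "q < 1" "q \<le> 3/2 * p"
  shows "(2/3) * (q - p) / (p * (1 - p)) \<le> logit q - logit p"
proof -
  have "(2/3) * (q - p) / (p * (1 - p)) = (q - p) / (3/2 * p) + (2/3) * ((q - p) / (1 - p))"
    using assms by (simp add: field_simps)
  also have "\<dots> \<le> (q - p) / q + (q - p) / (1 - p)"
    using assms by (intro add_mono divide_left_mono mult_left_le_one_le) auto
  also have "\<dots> \<le> logit q - logit p"
    using assms by (intro logit_diff_ge) auto
  finally show ?thesis .
qed

lemma kl_bernoulli_le_near: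
  assumes "0 < p" "p < q" "(1 - p) / 2 \<le> 1 - q"
  shows "kl_bernoulli p q \<le> 2 * (q - p)\<^sup>2 / (p * (1 - p))"
proof -
  have "q < 1" using assms by simp
  have "kl_bernoulli p q \<le> (q - p)\<^sup>2 / (q * (1 - q))"
    using assms \<open>q < 1\<close> by (intro kl_bernoulli_le_chi_square) auto
  also have "\<dots> \<le> (q - p)\<^sup>2 / (p * ((1 - p) / 2))"
    using assms \<open>q < 1\<close> by (intro divide_left_mono mult_mono mult_pos_pos) auto
  finally show ?thesis by (simp add: mult.commute)
qed

lemma binomial_weight_likelihood_ratio:
  assumes "0 < p" "p < 1" "0 < q" "q < 1" "k \<le> m"
  shows "binomial_weight m q k
    = binomial_weight m p k * exp ((logit q - logit p) * binomial_dev m p k - real m * kl_bernoulli p q)"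
proof -
  define L where "L r = real k * ln r + real (m - k) * ln (1 - r)" for r
  have weight: "binomial_weight m r k = real (m choose k) * exp (L r)" if "0 < r" "r < 1" for r
    using that by (simp add: binomial_weight_def L_def exp_add exp_of_nat_mult)
  have "L q = L p + ((logit q - logit p) * binomial_dev m p k - real m * kl_bernoulli p q)"
    using assms by (simp add: L_def logit_def kl_bernoulli_def binomial_dev_def ln_div of_nat_diff algebra_simps)
  then show ?thesis
    using assms by (simp add: weight exp_add)
qed

lemma pos_part_diff_exp_ge:
  fixes w s z c :: real
  assumes "0 \<le> w" "0 \<le> c"
  shows "w * (s * max z 0 - c) \<le> max (w * exp (s * z - c) - w) 0"
proof -
  have "w * (s * z - c) \<le> w * exp (s * z - c) - w"
    using mult_left_mono[OF exp_ge_add_one_self[of "s * z - c"] \<open>0 \<le> w\<close>] by (simp add: algebra_simps)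
  moreover have "0 \<le> w * c" using assms by simp
  ultimately show ?thesis by (cases "z \<ge> 0") (auto simp: max_def)
qed

lemma binomial_pos_excess_ge:
  assumes "0 < p" "p < 1" "0 < q" "q < 1"
  shows "(logit q - logit p) * binomial_expect m p (\<lambda>k. \<bar>binomial_dev m p k\<bar>) / 2 - real m * kl_bernoulli p q
    \<le> (\<Sum>k\<le>m. max (binomial_weight m q k - binomial_weight m p k) 0)"
proof -
  let ?s = "logit q - logit p" and ?c = "real m * kl_bernoulli p q" and ?Z = "binomial_dev m p"
  have "?s * binomial_expect m p (\<lambda>k. \<bar>?Z k\<bar>) / 2 - ?c = binomial_expect m p (\<lambda>k. ?s * max (?Z k) 0 + - ?c)"
    by (simp only: binomial_expect_add binomial_expect_cmult binomial_expect_const binomial_expect_pos_dev)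
  also have "\<dots> \<le> (\<Sum>k\<le>m. max (binomial_weight m q k - binomial_weight m p k) 0)"
    unfolding binomial_expect_def
  proof (intro sum_mono)
    fix k assume "k \<in> {..m}"
    then have "binomial_weight m q k = binomial_weight m p k * exp (?s * ?Z k - ?c)"
      using assms by (intro binomial_weight_likelihood_ratio) auto
    moreover have "0 \<le> binomial_weight m p k" "0 \<le> ?c"
      using assms by (simp_all add: binomial_weight_nonneg kl_bernoulli_nonneg)
    ultimately show "binomial_weight m p k * (?s * max (?Z k) 0 + - ?c) \<le> max (binomial_weight m q k - binomial_weight m p k) 0"
      using pos_part_diff_exp_ge[of "binomial_weight m p k" ?c ?s "?Z k"] by simp
  qed
  finally show ?thesis .
qed

text \<open>By the likelihood-ratio formula the weights for \<open>q\<close> exceed those for \<open>p\<close> exactly on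
  the half-line \<open>m KL(p, q) < (logit q - logit p) (k - m p)\<close>, whose indicator is monotone in \<open>k\<close>.\<close>
lemma binomial_pos_excess_monotone_test:
  assumes "0 < p" "p < q" "q < 1"
  obtains f where "mono f" "\<And>k. 0 \<le> f k \<and> f k \<le> 1"
    and "(\<Sum>k\<le>m. max (binomial_weight m q k - binomial_weight m p k) 0)
      = binomial_expect m q f - binomial_expect m p f"
proof
  let ?s = "logit q - logit p" and ?c = "real m * kl_bernoulli p q"
  define f where "f k = (of_bool (?c < ?s * binomial_dev m p k) :: real)" for k
  have "0 < (q - p) / q + (q - p) / (1 - p)" using assms by (intro add_pos_pos divide_pos_pos) auto
  then have "0 < ?s" using logit_diff_ge[of p q] assms by linarith
  then have "?s * binomial_dev m p k \<le> ?s * binomial_dev m p k'" if "k \<le> k'" for k k'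
    using that by (intro mult_left_mono) (auto simp: binomial_dev_def)
  then show "mono f"
    unfolding f_def by (intro monoI) (auto intro: less_le_trans)
  show "0 \<le> f k \<and> f k \<le> 1" for k by (simp add: f_def)
  show "(\<Sum>k\<le>m. max (binomial_weight m q k - binomial_weight m p k) 0)
      = binomial_expect m q f - binomial_expect m p f"
    unfolding binomial_expect_def sum_subtractf[symmetric]
  proof (intro sum.cong refl)
    fix k assume "k \<in> {..m}"
    define l where "l = ?s * binomial_dev m p k - ?c"
    have "binomial_weight m q k = binomial_weight m p k * exp l"
      using assms \<open>k \<in> {..m}\<close> unfolding l_def by (intro binomial_weight_likelihood_ratio) auto
    moreover have "0 \<le> binomial_weight m p k" using assms by (simp add: binomial_weight_nonneg)
    moreover have "f k = of_bool (0 < l)" by (simp add: f_def l_def)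
    ultimately show "max (binomial_weight m q k - binomial_weight m p k) 0
        = binomial_weight m q k * f k - binomial_weight m p k * f k"
      using mult_left_mono[of 1 "exp l" "binomial_weight m p k"] mult_left_mono[of "exp l" 1 "binomial_weight m p k"]
      by (cases "0 < l") (auto simp: max_def)
  qed
qed

lemma l1_bin_eq_sum:
  assumes "0 \<le> p" "p \<le> 1" "0 \<le> q" "q \<le> 1"
  shows "l1_bin m p q = (\<Sum>k\<le>m. \<bar>binomial_weight m p k - binomial_weight m q k\<bar>)"
  using assms by (simp add: l1_bin_def binomial_weight_def pmf_binomial)

lemma l1_bin_reflect:
  assumes "0 \<le> p" "p \<le> 1" "0 \<le> q" "q \<le> 1"
  shows "l1_bin m (1 - p) (1 - q) = l1_bin m p q"
proof -
  have "l1_bin m (1 - p) (1 - q) = (\<Sum>k\<le>m. \<bar>binomial_weight m (1 - p) k - binomial_weight m (1 - q) k\<bar>)"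
    using assms by (simp add: l1_bin_eq_sum)
  also have "\<dots> = (\<Sum>k\<le>m. \<bar>binomial_weight m (1 - p) (m - k) - binomial_weight m (1 - q) (m - k)\<bar>)"
    by (rule sum.reindex_bij_witness[where i="\<lambda>k. m - k" and j="\<lambda>k. m - k"]) auto
  also have "\<dots> = l1_bin m p q"
    using assms by (simp add: l1_bin_eq_sum binomial_weight_reflect)
  finally show ?thesis .
qed

lemma binomial_pos_excess_le_l1_bin:
  assumes "0 \<le> p" "p \<le> 1" "0 \<le> q" "q \<le> 1"
  shows "(\<Sum>k\<le>m. max (binomial_weight m q k - binomial_weight m p k) 0) \<le> l1_bin m p q"
  using assms unfolding l1_bin_eq_sum[OF assms] by (intro sum_mono) auto

lemma binomial_expect_diff_le_l1_bin:
  assumes "0 \<le> p" "p \<le> 1" "0 \<le> q" "q \<le> 1" and "\<And>k. 0 \<le> f k \<and> f k \<le> 1"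
  shows "binomial_expect m q f - binomial_expect m p f \<le> l1_bin m p q"
  unfolding l1_bin_eq_sum[OF assms(1-4)] binomial_expect_def sum_subtractf[symmetric]
proof (intro sum_mono)
  fix k
  have "(binomial_weight m q k - binomial_weight m p k) * f k \<le> \<bar>binomial_weight m q k - binomial_weight m p k\<bar> * f k"
    using assms(5) by (intro mult_right_mono) auto
  also have "\<dots> \<le> \<bar>binomial_weight m p k - binomial_weight m q k\<bar>"
    using assms(5) mult_left_mono[of "f k" 1 "\<bar>binomial_weight m q k - binomial_weight m p k\<bar>"] by (simp add: abs_minus_commute)
  finally show "binomial_weight m q k * f k - binomial_weight m p k * f k \<le> \<bar>binomial_weight m p k - binomial_weight m q k\<bar>"
    by (simp add: algebra_simps)
qed

lemma small_shift_le_param: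
  assumes "0 < p" "p < 1" and V: "real m * p * (1 - p) \<ge> 1"
    and small: "real m * d \<le> sqrt (real m * p * (1 - p)) / 24"
  shows "d \<le> p / 24" "d \<le> (1 - p) / 24"
proof -
  define V where "V = real m * p * (1 - p)"
  have "real m > 0" using V by (cases "m = 0") simp_all
  have "sqrt V * 1 \<le> sqrt V * sqrt V" using V by (intro mult_left_mono) (simp_all add: V_def)
  then have "sqrt V \<le> V" using V by (simp add: V_def)
  moreover have "V \<le> real m * p" "V \<le> real m * (1 - p)"
    using assms \<open>real m > 0\<close> by (simp_all add: V_def mult_left_le mult.commute mult.left_commute)
  ultimately have "real m * (24 * d) \<le> real m * p" "real m * (24 * d) \<le> real m * (1 - p)"
    using small by (simp_all add: V_def)
  then show "d \<le> p / 24" "d \<le> (1 - p) / 24"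
    using \<open>real m > 0\<close> by (simp_all add: mult_le_cancel_left_pos)
qed

text \<open>With \<open>t = m (q - p) / \<sigma>\<close> and \<open>\<sigma>\<^sup>2 = m p (1 - p)\<close>, the lower bound of
  \<open>binomial_pos_excess_ge\<close> is at least \<open>t / 6 - 2 t\<^sup>2\<close>, which is \<open>\<ge> t / 12\<close> for \<open>t \<le> 1/24\<close>.\<close>
lemma binomial_pos_excess_small_shift:
  assumes p: "0 < p" "p < 1" and V: "real m * p * (1 - p) \<ge> 1" and "p < q"
    and small: "real m * (q - p) \<le> sqrt (real m * p * (1 - p)) / 24"
  shows "real m * (q - p) / sqrt (real m * p * (1 - p)) / 12
    \<le> (\<Sum>k\<le>m. max (binomial_weight m q k - binomial_weight m p k) 0)"
proof -
  define V where "V = real m * p * (1 - p)"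
  define \<sigma> where "\<sigma> = sqrt V"
  define d where "d = q - p"
  define t where "t = real m * d / \<sigma>"
  have "\<sigma> > 0" "\<sigma> * \<sigma> = V" using V by (simp_all add: V_def \<sigma>_def)
  have "real m > 0" using V by (cases "m = 0") (simp_all add: V_def)
  have pq: "p * (1 - p) = \<sigma> * \<sigma> / real m"
    using \<open>\<sigma> * \<sigma> = V\<close> \<open>real m > 0\<close> by (simp add: V_def)
  have "d > 0" "real m * d \<le> \<sigma> / 24" using \<open>p < q\<close> small by (simp_all add: d_def V_def \<sigma>_def)
  have "d \<le> p / 24" "d \<le> (1 - p) / 24"
    using small_shift_le_param[OF p V, of d] small by (simp_all add: d_def)
  then have "q < 1" "q \<le> 3/2 * p" "(1 - p) / 2 \<le> 1 - q" using p by (simp_all add: d_def)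
  have slope: "(2/3) * d / (p * (1 - p)) \<le> logit q - logit p"
    using logit_diff_ge_near[of p q] p \<open>p < q\<close> \<open>q < 1\<close> \<open>q \<le> 3/2 * p\<close> by (simp add: d_def)
  have "0 < (2/3) * d / (p * (1 - p))" using p \<open>d > 0\<close> by simp
  have "t / 6 \<le> (logit q - logit p) * binomial_expect m p (\<lambda>k. \<bar>binomial_dev m p k\<bar>) / 2"
  proof -
    have "t / 6 = (2/3) * d / (p * (1 - p)) * (\<sigma> / 2) / 2"
      unfolding pq t_def using \<open>\<sigma> > 0\<close> \<open>real m > 0\<close> by (simp add: field_simps)
    also have "\<dots> \<le> (logit q - logit p) * binomial_expect m p (\<lambda>k. \<bar>binomial_dev m p k\<bar>) / 2"
      using slope \<open>0 < (2/3) * d / (p * (1 - p))\<close> binomial_expect_abs_dev_ge[of p m] p V \<open>\<sigma> > 0\<close>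
      by (intro divide_right_mono mult_mono) (auto simp: \<sigma>_def V_def)
    finally show ?thesis .
  qed
  moreover have "real m * kl_bernoulli p q \<le> 2 * t\<^sup>2"
  proof -
    have "real m * kl_bernoulli p q \<le> real m * (2 * d\<^sup>2 / (p * (1 - p)))"
      using kl_bernoulli_le_near[of p q] p \<open>p < q\<close> \<open>(1 - p) / 2 \<le> 1 - q\<close>
      by (intro mult_left_mono) (auto simp: d_def)
    also have "\<dots> = 2 * t\<^sup>2"
      unfolding pq t_def using \<open>\<sigma> > 0\<close> \<open>real m > 0\<close> by (simp add: field_simps power2_eq_square)
    finally show ?thesis .
  qed
  moreover have "2 * t\<^sup>2 \<le> t / 12"
  proof -
    have "0 \<le> t" "t \<le> 1/24"
      using \<open>d > 0\<close> \<open>\<sigma> > 0\<close> \<open>real m * d \<le> \<sigma> / 24\<close> by (simp_all add: t_def field_simps)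
    then show ?thesis using mult_left_mono[of t "1/24" t] by (simp add: power2_eq_square)
  qed
  ultimately have "t / 12 \<le> (\<Sum>k\<le>m. max (binomial_weight m q k - binomial_weight m p k) 0)"
    using binomial_pos_excess_ge[of p q m] p \<open>p < q\<close> \<open>q < 1\<close> by linarith
  then show ?thesis by (simp add: t_def d_def \<sigma>_def V_def)
qed

lemma l1_bin_lower_bound_less:
  assumes p: "0 < p" "p < 1" and V: "real m * p * (1 - p) \<ge> 1" and q: "p < q" "q \<le> 1"
  shows "(1/350) * min (real m * (q - p) / sqrt (real m * p * (1 - p))) 1 \<le> l1_bin m p q"
proof -
  define \<sigma> where "\<sigma> = sqrt (real m * p * (1 - p))"
  define t where "t = real m * (q - p) / \<sigma>"
  have "\<sigma> > 0" using V by (simp add: \<sigma>_def)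
  have "real m > 0" using V by (cases "m = 0") simp_all
  show ?thesis
  proof (cases "real m * (q - p) \<le> \<sigma> / 24")
    case True
    have "0 \<le> t" using q \<open>\<sigma> > 0\<close> by (simp add: t_def)
    then have "(1/350) * min t 1 \<le> t / 12" by (simp add: min_def)
    also have "\<dots> \<le> (\<Sum>k\<le>m. max (binomial_weight m q k - binomial_weight m p k) 0)"
      using binomial_pos_excess_small_shift[OF p V q(1)] True by (simp add: t_def \<sigma>_def)
    also have "\<dots> \<le> l1_bin m p q"
      using p q by (intro binomial_pos_excess_le_l1_bin) auto
    finally show ?thesis by (simp add: t_def \<sigma>_def)
  next
    case False
    text \<open>Reduce to the threshold shift \<open>q'\<close> (where \<open>t = 1/24\<close>): its excess over \<open>p\<close> is
      measured by a monotone test, whose expectation only grows from \<open>q'\<close> to \<open>q\<close>.\<close>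
    define q' where "q' = p + \<sigma> / (24 * real m)"
    have shift: "real m * (q' - p) = \<sigma> / 24" using \<open>real m > 0\<close> by (simp add: q'_def)
    then have "real m * (q' - p) < real m * (q - p)" using False by simp
    then have "q' < q" using \<open>real m > 0\<close> by (simp add: mult_less_cancel_left_pos)
    have "p < q'" using \<open>\<sigma> > 0\<close> \<open>real m > 0\<close> by (simp add: q'_def)
    obtain f where f: "mono f" "\<And>k. 0 \<le> f k \<and> f k \<le> 1"
      and excess: "(\<Sum>k\<le>m. max (binomial_weight m q' k - binomial_weight m p k) 0)
        = binomial_expect m q' f - binomial_expect m p f"
      using binomial_pos_excess_monotone_test[of p q' m] p \<open>p < q'\<close> \<open>q' < q\<close> q by auto
    have "(1/350) * min t 1 \<le> 1 / 288" by simp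
    also have "\<dots> = real m * (q' - p) / \<sigma> / 12" using shift \<open>\<sigma> > 0\<close> by simp
    also have "\<dots> \<le> (\<Sum>k\<le>m. max (binomial_weight m q' k - binomial_weight m p k) 0)"
      unfolding \<sigma>_def using shift by (intro binomial_pos_excess_small_shift[OF p V \<open>p < q'\<close>]) (simp add: \<sigma>_def)
    also have "\<dots> = binomial_expect m q' f - binomial_expect m p f" by (rule excess)
    also have "\<dots> \<le> binomial_expect m q f - binomial_expect m p f"
      using binomial_expect_mono_param[OF f(1), of q' q m] p \<open>p < q'\<close> \<open>q' < q\<close> q by simp
    also have "\<dots> \<le> l1_bin m p q"
      using p q f(2) by (intro binomial_expect_diff_le_l1_bin) auto
    finally show ?thesis by (simp add: t_def \<sigma>_def)
  qed
qed

lemma l1_bin_lower_bound: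
  assumes p: "0 < p" "p < 1" and V: "real m * p * (1 - p) \<ge> 1" and q: "0 \<le> q" "q \<le> 1"
  shows "(1/350) * min (real m * \<bar>p - q\<bar> / sqrt (real m * p * (1 - p))) 1 \<le> l1_bin m p q"
proof (cases p q rule: linorder_cases)
  case less
  then show ?thesis using l1_bin_lower_bound_less[OF p V less q(2)] by simp
next
  case equal
  then show ?thesis using p by (simp add: l1_bin_def)
next
  case greater
  have reflect: "real m * (1 - p) * (1 - (1 - p)) = real m * p * (1 - p)" by simp
  have "(1/350) * min (real m * ((1 - q) - (1 - p)) / sqrt (real m * (1 - p) * (1 - (1 - p)))) 1
      \<le> l1_bin m (1 - p) (1 - q)"
    using p V q greater by (intro l1_bin_lower_bound_less) (auto simp only: reflect)
  then show ?thesis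
    unfolding reflect using greater p q by (simp add: l1_bin_reflect)
qed

theorem lemma7:
  fixes c p q :: real and m :: nat
  assumes "c > 2" and "m \<ge> 3" and "0 \<le> p" and "p \<le> 1/2"
    and "real m * p \<ge> c" and "0 \<le> q" and "q \<le> 1"
  shows "l1_bin m p q \<ge> (1/350) * min (sqrt (real m) * \<bar>p - q\<bar> / sqrt (p * (1 - p))) 1"
proof -
  have "0 < p" using assms by (cases "p = 0") auto
  have V: "real m * p * (1 - p) \<ge> 1"
    using mult_mono[of 2 "real m * p" "1/2" "1 - p"] assms by simp
  have "sqrt (real m) * \<bar>p - q\<bar> / sqrt (p * (1 - p)) = real m * \<bar>p - q\<bar> / sqrt (real m * p * (1 - p))"
    using \<open>0 < p\<close> \<open>p \<le> 1/2\<close> \<open>m \<ge> 3\<close> by (simp add: real_sqrt_mult mult.assoc divide_simps)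
  then show ?thesis
    using l1_bin_lower_bound[OF \<open>0 < p\<close> _ V \<open>0 \<le> q\<close> \<open>q \<le> 1\<close>] \<open>p \<le> 1/2\<close> by simp
qed

end
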